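(* For every connected graph $G$ of order $n$, with $m$ edges and maximum degree $\Delta$, we have ${\rm I}_e(G)\le \left\lfloor\frac{m}{2}\right\rfloor+n+\Delta-2$.
   Context: All graphs are finite and simple. A graph is locally irregular if no two adjacent vertices have the same degree. An edge-irregulator of a graph $G$ is a set $S\subseteq E(G)$ such that $G-S$ is locally irregular; ${\rm I}_e(G)$ is the minimum cardinality of an edge-irregulator of $G$. *)

theory Defs
  imports Main
begin

definition simple_graph :: "'a set \<Rightarrow> 'a set set \<Rightarrow> bool" where
  "simple_graph V E \<longleftrightarrow> finite V \<and> (\<forall>e\<in>E. e \<subseteq> V \<and> card e = 2)"

definition degree :: "'a set set \<Rightarrow> 'a \<Rightarrow> nat" where
  "degree E v = card {e\<in>E. v \<in> e}"

definition max_degree :: "'a set \<Rightarrow> 'a set set \<Rightarrow> nat" where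
  "max_degree V E = Max (insert 0 (degree E ` V))"

definition adj :: "'a set set \<Rightarrow> 'a \<Rightarrow> 'a \<Rightarrow> bool" where
  "adj E u v \<longleftrightarrow> {u, v} \<in> E"

definition connected_graph :: "'a set \<Rightarrow> 'a set set \<Rightarrow> bool" where
  "connected_graph V E \<longleftrightarrow> V \<noteq> {} \<and> (\<forall>u\<in>V. \<forall>v\<in>V. (adj E)\<^sup>*\<^sup>* u v)"

definition locally_irregular :: "'a set set \<Rightarrow> bool" where
  "locally_irregular E \<longleftrightarrow> (\<forall>u v. {u, v} \<in> E \<longrightarrow> degree E u \<noteq> degree E v)"

definition edge_irregulator :: "'a set set \<Rightarrow> 'a set set \<Rightarrow> bool" where
  "edge_irregulator E S \<longleftrightarrow> S \<subseteq> E \<and> locally_irregular (E - S)"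

definition irr_e :: "'a set set \<Rightarrow> nat" where
  "irr_e E = (LEAST k. \<exists>S. edge_irregulator E S \<and> card S = k)"

end

theory Submission
  imports Defs
begin

text \<open>Take a maximum cut (A, V - A). Its edge set F contains at least half of the edges,
  and the graph (V, F) is connected, since otherwise flipping a single vertex or a component
  of F would enlarge the cut. If one side B of this bipartite graph has even size, there is a
  T-join J of at most n - 1 edges such that exactly the vertices of B have odd degree in F - J;
  then adjacent vertices have degrees of different parity, so F - J is locally irregular.
  If both sides are odd, first delete the at most \<Delta> edges at a non-cut vertex, which makes
  one side even.\<close>

lemma simple_graph_finite_edges:
  assumes "simple_graph V E"
  shows "finite E"
proof -
  have "E \<subseteq> Pow V" "finite V" using assms unfolding simple_graph_def by auto
  then show ?thesis by (meson finite_Pow_iff finite_subset)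
qed

lemma simple_graph_edgeE:
  assumes "simple_graph V E" "e \<in> E"
  obtains a b where "e = {a, b}" "a \<noteq> b" "a \<in> V" "b \<in> V"
  using assms unfolding simple_graph_def by (metis card_2_iff insert_subset)

lemma simple_graph_subset: "simple_graph V E \<Longrightarrow> F \<subseteq> E \<Longrightarrow> simple_graph V F"
  unfolding simple_graph_def by blast

lemma simple_graph_delete_vertex:
  "simple_graph V E \<Longrightarrow> simple_graph (V - {v}) {e\<in>E. v \<notin> e}"
  unfolding simple_graph_def by blast

lemma card_ge_2_otherE:
  assumes "card V \<ge> 2" "x \<in> V"
  obtains y where "y \<in> V" "y \<noteq> x"
  using assms by (metis Suc_1 card.infinite card_2_iff' card_le_Suc0_iff_eq
      not_less_eq_eq order_antisym_conv zero_le)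

lemma card_Diff_Diff_subset:
  assumes "finite A" "C \<subseteq> B" "B \<subseteq> A"
  shows "card (A - C) = card (A - B) + card (B - C)"
proof -
  have "A - C = (A - B) \<union> (B - C)" using assms(2,3) by auto
  also have "card \<dots> = card (A - B) + card (B - C)"
    using assms(1,3) by (intro card_Un_disjoint) (auto intro: finite_subset)
  finally show ?thesis .
qed

subsection \<open>Degrees\<close>

lemma degree_insert:
  assumes "finite J" "e \<notin> J"
  shows "degree (insert e J) x = degree J x + (if x \<in> e then 1 else 0)"
proof -
  have "{f\<in>insert e J. x \<in> f} = (if x \<in> e then insert e {f\<in>J. x \<in> f} else {f\<in>J. x \<in> f})"
    by auto
  then show ?thesis unfolding degree_def using assms by simp
qed

lemma degree_Diff:
  assumes "finite F" "J \<subseteq> F"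
  shows "degree F x = degree (F - J) x + degree J x"
proof -
  have "{e\<in>F. x \<in> e} = {e\<in>F - J. x \<in> e} \<union> {e\<in>J. x \<in> e}" using assms(2) by auto
  moreover have "finite {e\<in>F - J. x \<in> e}" "finite {e\<in>J. x \<in> e}"
    using assms by (auto intro: finite_subset)
  ultimately show ?thesis
    unfolding degree_def by (simp add: card_Un_disjoint[symmetric] Int_def)
qed

lemma sum_degree:
  assumes "simple_graph V E"
  shows "(\<Sum>x\<in>V. degree E x) = 2 * card E"
proof -
  have fin: "finite V" "finite E"
    using assms simple_graph_finite_edges unfolding simple_graph_def by auto
  have "(\<Sum>x\<in>V. degree E x) = (\<Sum>x\<in>V. \<Sum>e\<in>E. if x \<in> e then 1 else 0)"
    unfolding degree_def using fin by (intro sum.cong) (auto simp: sum.If_cases Int_def)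
  also have "\<dots> = (\<Sum>e\<in>E. \<Sum>x\<in>V. if x \<in> e then 1 else 0)"
    by (rule sum.swap)
  also have "\<dots> = (\<Sum>e\<in>E. 2)"
  proof (rule sum.cong)
    fix e assume "e \<in> E"
    then have "V \<inter> e = e" "card e = 2" using assms unfolding simple_graph_def by auto
    then show "(\<Sum>x\<in>V. if x \<in> e then 1 else 0) = (2::nat)"
      using fin by (simp add: sum.If_cases)
  qed simp
  finally show ?thesis by simp
qed

lemma degree_le_max_degree: "finite V \<Longrightarrow> x \<in> V \<Longrightarrow> degree E x \<le> max_degree V E"
  unfolding max_degree_def by simp

lemma max_degree_mono:
  assumes "finite V" "finite E" "F \<subseteq> E"
  shows "max_degree V F \<le> max_degree V E"
proof -
  have "degree F x \<le> degree E x" for x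
    unfolding degree_def using assms(2,3) by (auto intro: card_mono)
  then have "degree F x \<le> max_degree V E" if "x \<in> V" for x
    using degree_le_max_degree[OF assms(1) that] le_trans by blast
  then show ?thesis
    unfolding max_degree_def[of V F] using assms(1) by (subst Max_le_iff) auto
qed

subsection \<open>Connectivity\<close>

lemma symp_adj: "symp (adj E)"
  unfolding adj_def by (intro sympI) (simp add: insert_commute)

lemma rtranclp_boundary_step:
  "R\<^sup>*\<^sup>* x y \<Longrightarrow> P x \<Longrightarrow> \<not> P y \<Longrightarrow> \<exists>c d. P c \<and> \<not> P d \<and> R c d"
  by (induction rule: rtranclp_induct) auto

lemma connected_graph_edge_at:
  assumes "simple_graph V E" "connected_graph V E" "card V \<ge> 2" "x \<in> V"
  obtains u where "{x, u} \<in> E" "u \<noteq> x" "u \<in> V"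
proof -
  obtain y where "y \<in> V" "y \<noteq> x" using assms(3,4) by (rule card_ge_2_otherE)
  then have "(adj E)\<^sup>*\<^sup>* x y" using assms(2,4) unfolding connected_graph_def by auto
  then obtain u where u: "{x, u} \<in> E" using \<open>y \<noteq> x\<close>
    unfolding adj_def by (cases rule: converse_rtranclpE) auto
  then have "{x, u} \<subseteq> V" "card {x, u} = 2" using assms(1) unfolding simple_graph_def by auto
  then show ?thesis using that u by (cases "u = x") auto
qed

lemma relpowp_adj_avoiding:
  assumes "(adj E ^^ k) r x" "x \<noteq> v" "\<And>j. (adj E ^^ j) r v \<Longrightarrow> k \<le> j"
  shows "(adj {e\<in>E. v \<notin> e})\<^sup>*\<^sup>* r x"
  using assms
proof (induction k arbitrary: x)
  case 0
  then show ?case by simp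
next
  case (Suc k)
  then obtain y where y: "(adj E ^^ k) r y" "adj E y x" by (meson relpowp_Suc_E)
  have "y \<noteq> v" using y(1) Suc.prems(3) by force
  then have "(adj {e\<in>E. v \<notin> e})\<^sup>*\<^sup>* r y"
    using Suc.IH y(1) Suc.prems(3) by (meson Suc_leD)
  moreover have "adj {e\<in>E. v \<notin> e} y x"
    using y(2) \<open>y \<noteq> v\<close> Suc.prems(2) unfolding adj_def by auto
  ultimately show ?case by (rule rtranclp.rtrancl_into_rtrancl)
qed

text \<open>A vertex farthest from some root is not a cut vertex: shortest walks to
  the other vertices never pass through it.\<close>

lemma connected_graph_non_cut_vertex:
  assumes "finite V" "connected_graph V E" "card V \<ge> 2"
  obtains v where "v \<in> V" "connected_graph (V - {v}) {e\<in>E. v \<notin> e}"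
proof -
  obtain r where r: "r \<in> V" using assms(2) unfolding connected_graph_def by auto
  define dist where "dist x = (LEAST k. (adj E ^^ k) r x)" for x
  have walk: "(adj E ^^ dist x) r x" if "x \<in> V" for x
  proof -
    have "\<exists>k. (adj E ^^ k) r x"
      using assms(2) r that unfolding connected_graph_def by (simp add: rtranclp_power)
    then show ?thesis unfolding dist_def by (rule LeastI_ex)
  qed
  have dist_le: "dist x \<le> k" if "(adj E ^^ k) r x" for x k
    unfolding dist_def using that by (rule Least_le)
  have "Max (dist ` V) \<in> dist ` V" using assms(1) r by (intro Max_in) auto
  then obtain v where v: "v \<in> V" "dist v = Max (dist ` V)" by auto
  have far: "dist x \<le> dist v" if "x \<in> V" for x
    using v(2) assms(1) that by simp
  obtain x where x: "x \<in> V" "x \<noteq> r" using assms(3) r by (rule card_ge_2_otherE)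
  have "0 < dist x" using walk[OF x(1)] x(2) by (metis gr0I relpowp_0_E)
  then have "r \<noteq> v" using far[OF x(1)] dist_le[of 0 r] by auto
  have reach: "(adj {e\<in>E. v \<notin> e})\<^sup>*\<^sup>* r y" if "y \<in> V - {v}" for y
  proof (rule relpowp_adj_avoiding)
    show "(adj E ^^ dist y) r y" "y \<noteq> v" using walk that by auto
    show "dist y \<le> j" if "(adj E ^^ j) r v" for j
      using far[of y] dist_le[OF that] \<open>y \<in> V - {v}\<close> by simp
  qed
  have "(adj {e\<in>E. v \<notin> e})\<^sup>*\<^sup>* y z" if "y \<in> V - {v}" "z \<in> V - {v}" for y z
    using reach[OF that(1)] reach[OF that(2)] symp_rtranclp[OF symp_adj]
    by (meson rtranclp_trans sympD)
  then have "connected_graph (V - {v}) {e\<in>E. v \<notin> e}"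
    unfolding connected_graph_def using r \<open>r \<noteq> v\<close> by auto
  then show ?thesis using that v(1) by blast
qed

text \<open>When t v is odd, the demand at the neighbour u is shifted by one to make room for
  the edge {v, u}.\<close>

lemma parity_subgraph_extend:
  assumes "finite E" "J \<subseteq> {e\<in>E. v \<notin> e}" "{v, u} \<in> E" "u \<noteq> v"
    and "\<And>x. x \<in> V - {v} \<Longrightarrow> even (degree J x + t x + (if odd (t v) \<and> x = u then 1 else 0))"
  shows "\<exists>J'\<subseteq>E. card J' \<le> card J + 1 \<and> (\<forall>x\<in>V. even (degree J' x + t x))"
proof -
  have "{e\<in>J. v \<in> e} = {}" using assms(2) by auto
  then have avoid_v: "degree J v = 0" unfolding degree_def by (simp only: card.empty)
  show ?thesis
  proof (cases "even (t v)")
    case True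
    have "even (degree J x + t x)" if "x \<in> V" for x
    proof (cases "x = v")
      case False
      then show ?thesis using assms(5)[of x] that \<open>even (t v)\<close> by simp
    qed (simp add: avoid_v \<open>even (t v)\<close>)
    then show ?thesis using assms(2) by (intro exI[of _ J]) auto
  next
    case False
    have fin: "finite J" using finite_subset[OF assms(2)] assms(1) by simp
    have new: "{v, u} \<notin> J" using assms(2) by auto
    have "even (degree (insert {v, u} J) x + t x)" if "x \<in> V" for x
    proof (cases "x = v")
      case True
      then show ?thesis using avoid_v \<open>odd (t v)\<close> by (simp add: degree_insert[OF fin new])
    next
      case False
      then have "even (degree J x + t x + (if x = u then 1 else 0))"
        using assms(5)[of x] that \<open>odd (t v)\<close> by simp
      then show ?thesis using False by (simp add: degree_insert[OF fin new] ac_simps)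
    qed
    then show ?thesis using assms(2,3) fin new by (intro exI[of _ "insert {v, u} J"]) auto
  qed
qed

text \<open>J is a T-join for T = {x. odd (t x)}. It has at most one edge per vertex but one,
  since peeling off a non-cut vertex v costs at most one edge at v.\<close>

lemma exists_parity_subgraph:
  assumes "simple_graph V E" "connected_graph V E" "even (\<Sum>x\<in>V. t x)"
  shows "\<exists>J\<subseteq>E. card J \<le> card V - 1 \<and> (\<forall>x\<in>V. even (degree J x + t x))"
  using assms
proof (induction "card V" arbitrary: V E t rule: less_induct)
  case less
  have fin: "finite V" "finite E"
    using less.prems(1) simple_graph_finite_edges unfolding simple_graph_def by auto
  show ?case
  proof (cases "card V \<ge> 2")
    case False
    have "card V \<noteq> 0" using fin less.prems(2) unfolding connected_graph_def by simp
    then have "card V = 1" using False by linarith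
    then obtain w where w: "V = {w}" by (rule card_1_singletonE)
    have "E = {}" using less.prems(1) w by (auto elim: simple_graph_edgeE)
    then show ?thesis using less.prems(3) w by (intro exI[of _ "{}"]) (simp add: degree_def)
  next
    case True
    obtain v where v: "v \<in> V" and conn': "connected_graph (V - {v}) {e\<in>E. v \<notin> e}"
      using fin(1) less.prems(2) True by (rule connected_graph_non_cut_vertex)
    obtain u where u: "{v, u} \<in> E" "u \<noteq> v" "u \<in> V"
      using less.prems(1,2) True v by (rule connected_graph_edge_at)
    define t' where "t' x = t x + (if odd (t v) \<and> x = u then 1 else 0)" for x
    have "(\<Sum>x\<in>V. t x) = t v + (\<Sum>x\<in>V - {v}. t x)" using fin(1) v by (rule sum.remove)
    moreover have "(\<Sum>x\<in>V - {v}. t' x) = (\<Sum>x\<in>V - {v}. t x) + (if odd (t v) then 1 else 0)"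
      unfolding t'_def using u fin(1) by (simp add: sum.distrib)
    ultimately have even': "even (\<Sum>x\<in>V - {v}. t' x)" using less.prems(3) by auto
    have smaller: "card (V - {v}) < card V" using fin(1) v by (rule card_Diff1_less)
    obtain J where J: "J \<subseteq> {e\<in>E. v \<notin> e}" "card J \<le> card (V - {v}) - 1"
      "\<forall>x\<in>V - {v}. even (degree J x + t' x)"
      using less.hyps[OF smaller simple_graph_delete_vertex[OF less.prems(1)] conn' even'] by blast
    then obtain J' where "J' \<subseteq> E" "card J' \<le> card J + 1" "\<forall>x\<in>V. even (degree J' x + t x)"
      using parity_subgraph_extend[OF fin(2) J(1) u(1,2), of V t] unfolding t'_def by auto
    moreover have "card J + 1 \<le> card V - 1" using J(2) v fin(1) True by simp
    ultimately show ?thesis by auto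
  qed
qed

subsection \<open>Maximum cuts\<close>

definition cut_edges :: "'a set set \<Rightarrow> 'a set \<Rightarrow> 'a set set" where
  "cut_edges E A = {e\<in>E. e \<inter> A \<noteq> {} \<and> e - A \<noteq> {}}"

lemma pair_in_cut_edges: "{a, b} \<in> cut_edges E A \<longleftrightarrow> {a, b} \<in> E \<and> (a \<in> A \<longleftrightarrow> b \<notin> A)"
  unfolding cut_edges_def by auto

lemma cut_edges_subset: "cut_edges F A = F \<Longrightarrow> F' \<subseteq> F \<Longrightarrow> cut_edges F' A = F'"
  unfolding cut_edges_def by blast

lemma cut_edges_Int_vertices: "simple_graph V E \<Longrightarrow> cut_edges E (V \<inter> A) = cut_edges E A"
  unfolding cut_edges_def simple_graph_def by blast

lemma cut_edges_Diff_vertices: "simple_graph V E \<Longrightarrow> cut_edges E (V - A) = cut_edges E A"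
  unfolding cut_edges_def simple_graph_def by blast

lemma cut_edges_sym_diff:
  assumes "simple_graph V E"
  shows "cut_edges E ((A - C) \<union> (C - A))
    = (cut_edges E A - cut_edges E C) \<union> (cut_edges E C - cut_edges E A)"
proof (rule set_eqI)
  fix e
  show "e \<in> cut_edges E ((A - C) \<union> (C - A))
    \<longleftrightarrow> e \<in> (cut_edges E A - cut_edges E C) \<union> (cut_edges E C - cut_edges E A)"
  proof (cases "e \<in> E")
    case True
    with assms obtain a b where "e = {a, b}" by (auto elim: simple_graph_edgeE)
    then show ?thesis using True by (auto simp: pair_in_cut_edges)
  next
    case False
    then show ?thesis unfolding cut_edges_def by auto
  qed
qed

definition max_cut :: "'a set \<Rightarrow> 'a set set \<Rightarrow> 'a set \<Rightarrow> bool" where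
  "max_cut V E A \<longleftrightarrow> A \<subseteq> V \<and> (\<forall>B\<subseteq>V. card (cut_edges E B) \<le> card (cut_edges E A))"

lemma max_cut_exists:
  assumes "finite V"
  obtains A where "max_cut V E A"
proof -
  let ?size = "\<lambda>B. card (cut_edges E B)"
  have "Max (?size ` Pow V) \<in> ?size ` Pow V" using assms by (intro Max_in) auto
  then obtain A where A: "A \<subseteq> V" "?size A = Max (?size ` Pow V)" by auto
  have "?size B \<le> ?size A" if "B \<subseteq> V" for B
    unfolding A(2) using assms that by (intro Max_ge) auto
  then have "max_cut V E A" unfolding max_cut_def using A(1) by blast
  then show ?thesis by (rule that)
qed

text \<open>If the cut were disconnected, flipping the sides of one of its components
  would keep all cut edges and gain an edge of E leaving the component.\<close>

lemma max_cut_connected: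
  assumes "simple_graph V E" "connected_graph V E" "max_cut V E A"
  shows "connected_graph V (cut_edges E A)"
proof -
  define F where "F = cut_edges E A"
  have fin: "finite (cut_edges E B)" for B
    using simple_graph_finite_edges[OF assms(1)] unfolding cut_edges_def by simp
  have "(adj F)\<^sup>*\<^sup>* x y" if xy: "x \<in> V" "y \<in> V" for x y
  proof (rule ccontr)
    assume not_reached: "\<not> (adj F)\<^sup>*\<^sup>* x y"
    define C where "C = {z\<in>V. (adj F)\<^sup>*\<^sup>* x z}"
    have "(adj E)\<^sup>*\<^sup>* x y" using assms(2) xy unfolding connected_graph_def by blast
    then obtain p d where "p \<in> C" "d \<notin> C" "adj E p d"
      using rtranclp_boundary_step[of "adj E" x y "\<lambda>z. z \<in> C"] xy not_reached
      unfolding C_def by auto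
    then have leaving: "{p, d} \<in> cut_edges E C" unfolding adj_def by (simp add: pair_in_cut_edges)
    have closed: "a \<in> C \<longleftrightarrow> b \<in> C" if "{a, b} \<in> F" for a b
    proof -
      have "adj F a b" "adj F b a" using that unfolding adj_def by (simp_all add: insert_commute)
      then have "(adj F)\<^sup>*\<^sup>* x a \<longleftrightarrow> (adj F)\<^sup>*\<^sup>* x b"
        by (blast intro: rtranclp.rtrancl_into_rtrancl)
      moreover have "a \<in> V" "b \<in> V"
        using that assms(1) unfolding F_def cut_edges_def simple_graph_def by auto
      ultimately show ?thesis unfolding C_def by blast
    qed
    have disjoint: "cut_edges E C \<inter> F = {}"
    proof (rule ccontr)
      assume "cut_edges E C \<inter> F \<noteq> {}"
      then obtain e where e: "e \<in> cut_edges E C" "e \<in> F" by auto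
      then have "e \<in> E" unfolding cut_edges_def by simp
      then obtain a b where "e = {a, b}" using simple_graph_edgeE[OF assms(1)] by blast
      then show False using e closed by (auto simp: pair_in_cut_edges)
    qed
    define B where "B = (A - C) \<union> (C - A)"
    have "B \<subseteq> V" using assms(3) unfolding B_def C_def max_cut_def by auto
    have "cut_edges E B = F \<union> cut_edges E C"
      using cut_edges_sym_diff[OF assms(1)] disjoint unfolding B_def F_def by blast
    then have "F \<subset> cut_edges E B" using leaving disjoint by blast
    then have "card F < card (cut_edges E B)" by (rule psubset_card_mono[OF fin])
    then show False using assms(3) \<open>B \<subseteq> V\<close> unfolding max_cut_def F_def by auto
  qed
  then show ?thesis using assms(2) unfolding connected_graph_def F_def by simp
qed

text \<open>Moving the single vertex x to the other side must not enlarge the cut.\<close>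

lemma max_cut_degree_le:
  assumes "simple_graph V E" "max_cut V E A" "x \<in> V"
  shows "degree (E - cut_edges E A) x \<le> degree (cut_edges E A) x"
proof -
  define F where "F = cut_edges E A"
  define I where "I = {e\<in>E. x \<in> e}"
  have fin: "finite F" "finite I"
    using simple_graph_finite_edges[OF assms(1)] unfolding F_def I_def cut_edges_def by auto
  have "cut_edges E {x} = I"
    unfolding I_def cut_edges_def using assms(1) by (auto elim: simple_graph_edgeE)
  then have "cut_edges E ((A - {x}) \<union> ({x} - A)) = (F - I) \<union> (I - F)"
    using cut_edges_sym_diff[OF assms(1)] unfolding F_def by blast
  moreover have "(A - {x}) \<union> ({x} - A) \<subseteq> V" using assms(2,3) unfolding max_cut_def by auto
  ultimately have "card ((F - I) \<union> (I - F)) \<le> card F"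
    using assms(2) unfolding max_cut_def F_def by metis
  moreover have "card ((F - I) \<union> (I - F)) = card (F - I) + card (I - F)"
    using fin by (intro card_Un_disjoint) auto
  moreover have "card F = card (F - I) + card (F \<inter> I)"
    using card_Int_Diff[OF fin(1), of I] by simp
  moreover have "degree (E - F) x = card (I - F)" "degree F x = card (F \<inter> I)"
    unfolding degree_def I_def F_def cut_edges_def by (auto intro: arg_cong[where f = card])
  ultimately show ?thesis unfolding F_def by linarith
qed

lemma max_cut_uncut_card:
  assumes "simple_graph V E" "max_cut V E A"
  shows "card (E - cut_edges E A) \<le> card E div 2"
proof -
  define F where "F = cut_edges E A"
  have "F \<subseteq> E" unfolding F_def cut_edges_def by auto
  have fin: "finite E" using assms(1) by (rule simple_graph_finite_edges)
  have "2 * card (E - F) = (\<Sum>x\<in>V. degree (E - F) x)"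
    using sum_degree[OF simple_graph_subset[OF assms(1)]] by simp
  also have "\<dots> \<le> (\<Sum>x\<in>V. degree F x)"
    using max_cut_degree_le[OF assms] unfolding F_def by (rule sum_mono)
  also have "\<dots> = 2 * card F"
    using sum_degree[OF simple_graph_subset[OF assms(1) \<open>F \<subseteq> E\<close>]] by simp
  finally have "card (E - F) \<le> card F" by simp
  moreover have "card (E - F) = card E - card F"
    using fin \<open>F \<subseteq> E\<close> by (meson card_Diff_subset finite_subset)
  ultimately show ?thesis unfolding F_def by linarith
qed

subsection \<open>Irregularizing bipartite graphs\<close>

text \<open>Delete a parity subgraph so that exactly the vertices of B get odd degree;
  every remaining edge joins B to its complement, hence vertices of different parity.\<close>

lemma bipartite_irregular_even_part:
  assumes "simple_graph V F" "connected_graph V F" "cut_edges F B = F" "B \<subseteq> V" "even (card B)"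
  shows "\<exists>H\<subseteq>F. card (F - H) \<le> card V - 1 \<and> locally_irregular H"
proof -
  have fin: "finite V" "finite F"
    using assms(1) simple_graph_finite_edges unfolding simple_graph_def by auto
  define t where "t x = degree F x + (if x \<in> B then 1 else 0)" for x
  have "(\<Sum>x\<in>V. if x \<in> B then 1 else 0) = card B"
    using fin(1) assms(4) by (simp add: sum.If_cases Int_absorb1)
  then have "(\<Sum>x\<in>V. t x) = 2 * card F + card B"
    unfolding t_def using sum_degree[OF assms(1)] by (simp add: sum.distrib)
  then have "even (\<Sum>x\<in>V. t x)" using assms(5) by simp
  then obtain J where J: "J \<subseteq> F" "card J \<le> card V - 1" "\<forall>x\<in>V. even (degree J x + t x)"
    using exists_parity_subgraph[OF assms(1,2)] by blast
  define H where "H = F - J"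
  have odd_iff: "odd (degree H x) \<longleftrightarrow> x \<in> B" if "x \<in> V" for x
  proof -
    have "even (degree J x + t x)" using J(3) that by blast
    then show ?thesis
      unfolding t_def degree_Diff[OF fin(2) J(1), of x] H_def by (cases "x \<in> B") auto
  qed
  have "locally_irregular H"
    unfolding locally_irregular_def
  proof (intro allI impI)
    fix u w assume "{u, w} \<in> H"
    then have "{u, w} \<in> cut_edges F B" using assms(3) unfolding H_def by simp
    moreover have "u \<in> V" "w \<in> V"
      using \<open>{u, w} \<in> H\<close> assms(1) unfolding H_def simple_graph_def by auto
    ultimately show "degree H u \<noteq> degree H w"
      using odd_iff[of u] odd_iff[of w] by (auto simp: pair_in_cut_edges)
  qed
  moreover have "H \<subseteq> F" "F - H = J" unfolding H_def using J(1) by auto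
  ultimately show ?thesis using J(2) by auto
qed

lemma bipartite_irregular_even_side:
  assumes "simple_graph V F" "connected_graph V F" "cut_edges F A = F"
    "even (card (V \<inter> A)) \<or> even (card (V - A))"
  shows "\<exists>H\<subseteq>F. card (F - H) \<le> card V - 1 \<and> locally_irregular H"
  using assms(4)
proof
  assume "even (card (V \<inter> A))"
  then show ?thesis
    using assms(1-3) cut_edges_Int_vertices[OF assms(1)]
    by (intro bipartite_irregular_even_part) auto
next
  assume "even (card (V - A))"
  then show ?thesis
    using assms(1-3) cut_edges_Diff_vertices[OF assms(1)]
    by (intro bipartite_irregular_even_part) auto
qed

lemma bipartite_irregular_deletion:
  assumes "simple_graph V F" "connected_graph V F" "cut_edges F A = F" "card V \<ge> 2"
  shows "\<exists>H\<subseteq>F. locally_irregular H \<and> card (F - H) + 2 \<le> card V + max_degree V F"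
proof -
  have fin: "finite V" "finite F"
    using assms(1) simple_graph_finite_edges unfolding simple_graph_def by auto
  consider (even) "even (card (V \<inter> A)) \<or> even (card (V - A))"
    | (odd) "odd (card (V \<inter> A))" "odd (card (V - A))" by blast
  then show ?thesis
  proof cases
    case even
    then obtain H where H: "H \<subseteq> F" "card (F - H) \<le> card V - 1" "locally_irregular H"
      using bipartite_irregular_even_side[OF assms(1-3)] by blast
    obtain x where x: "x \<in> V" using assms(4) by fastforce
    then obtain u where "{x, u} \<in> F" using assms(1,2,4) by (auto elim: connected_graph_edge_at)
    then have "{e\<in>F. x \<in> e} \<noteq> {}" by auto
    then have "1 \<le> degree F x" unfolding degree_def using fin(2) by (simp add: Suc_leI card_gt_0_iff)
    then have "1 \<le> max_degree V F" using degree_le_max_degree[OF fin(1) x, of F] by linarith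
    then show ?thesis using H assms(4) by auto
  next
    case odd
    obtain v where v: "v \<in> V" and conn': "connected_graph (V - {v}) {e\<in>F. v \<notin> e}"
      using fin(1) assms(2,4) by (rule connected_graph_non_cut_vertex)
    define F' where "F' = {e\<in>F. v \<notin> e}"
    have simple': "simple_graph (V - {v}) F'"
      unfolding F'_def using assms(1) by (rule simple_graph_delete_vertex)
    have "(V - {v}) \<inter> A = V \<inter> A - {v}" "V - {v} - A = V - A - {v}" by auto
    then have "even (card ((V - {v}) \<inter> A)) \<or> even (card (V - {v} - A))"
      using odd v fin(1) by (cases "v \<in> A") (auto simp: card_Diff_singleton odd_pos)
    moreover have "cut_edges F' A = F'" using assms(3) unfolding F'_def by (rule cut_edges_subset) auto
    ultimately obtain H where H: "H \<subseteq> F'" "card (F' - H) \<le> card (V - {v}) - 1" "locally_irregular H"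
      using bipartite_irregular_even_side[OF simple' conn'[folded F'_def]] by blast
    have "F - F' = {e\<in>F. v \<in> e}" unfolding F'_def by auto
    then have "card (F - F') \<le> max_degree V F"
      using degree_le_max_degree[OF fin(1) v, of F] unfolding degree_def by simp
    moreover have "card (F - H) = card (F - F') + card (F' - H)"
      using fin(2) H(1) by (rule card_Diff_Diff_subset) (auto simp: F'_def)
    ultimately have "card (F - H) + 2 \<le> card V + max_degree V F"
      using H(2) v fin(1) assms(4) by simp
    then show ?thesis using H(1,3) unfolding F'_def by blast
  qed
qed

lemma irr_e_le_card_Diff:
  assumes "H \<subseteq> E" "locally_irregular H"
  shows "irr_e E \<le> card (E - H)"
proof -
  have "E - (E - H) = H" using assms(1) by auto
  then have "edge_irregulator E (E - H)" using assms(2) unfolding edge_irregulator_def by simp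
  then show ?thesis unfolding irr_e_def by (intro Least_le) blast
qed

theorem theorem7:
  fixes V :: "'a set" and E :: "'a set set"
  assumes "simple_graph V E"
    and "connected_graph V E"
    and "card V \<ge> 2"
  shows "int (irr_e E) \<le> int (card E div 2) + int (card V) + int (max_degree V E) - 2"
proof -
  have fin: "finite V" "finite E"
    using assms(1) simple_graph_finite_edges unfolding simple_graph_def by auto
  obtain A where A: "max_cut V E A" using fin(1) by (rule max_cut_exists)
  define F where "F = cut_edges E A"
  have "F \<subseteq> E" unfolding F_def cut_edges_def by auto
  have "simple_graph V F" using assms(1) \<open>F \<subseteq> E\<close> by (rule simple_graph_subset)
  moreover have "connected_graph V F" unfolding F_def using assms(1,2) A by (rule max_cut_connected)
  moreover have "cut_edges F A = F" unfolding F_def cut_edges_def by auto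
  ultimately have "\<exists>H\<subseteq>F. locally_irregular H \<and> card (F - H) + 2 \<le> card V + max_degree V F"
    using assms(3) by (rule bipartite_irregular_deletion)
  then obtain H where H: "H \<subseteq> F" "locally_irregular H"
    "card (F - H) + 2 \<le> card V + max_degree V F" by blast
  have "max_degree V F \<le> max_degree V E" using fin \<open>F \<subseteq> E\<close> by (rule max_degree_mono)
  moreover have "card (E - F) \<le> card E div 2"
    unfolding F_def using assms(1) A by (rule max_cut_uncut_card)
  moreover have "card (E - H) = card (E - F) + card (F - H)"
    using fin(2) H(1) \<open>F \<subseteq> E\<close> by (rule card_Diff_Diff_subset)
  moreover have "irr_e E \<le> card (E - H)" using H(1,2) \<open>F \<subseteq> E\<close> by (intro irr_e_le_card_Diff) auto
  ultimately have "irr_e E + 2 \<le> card E div 2 + card V + max_degree V E" using H(3) by linarith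
  then show ?thesis by linarith
qed

end
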